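(* For every $\varepsilon\in(0,1]$ there exists $n_0$ such that for every $n\geq n_0$ the following holds. Let $G$ be an $(n,\varepsilon)$-digraph, let $\mathbf{x}$ be a perfect fractional matching of $G$ which is $b$-normal for some $b\geq1$, and let $(Z_t)_{t\in\mathbb{N}_0}$ be a random walk on $G$ induced by $\mathbf{x}$ following the pattern of an oriented path $L=(y_t)_{t\in\mathbb{N}_0}$. Then for every vertex $v\in V(G)$ and every $t\geq5+4b^2\varepsilon^{-1}\log b$, $\mathbb{P}[Z_t=v]=(1\pm e^{-\frac{\varepsilon}{2b^2}t})\frac1n$.
   Context: $\log=\log_2$; $a=(1\pm\delta)\beta$ means $(1-\delta)\beta\leq a\leq(1+\delta)\beta$. Digraphs have no loops and at most one edge from $v$ to $w$ per ordered pair. An $(n,\varepsilon)$-digraph is a digraph on $n$ vertices with every in- and out-degree at least $(\frac12+\varepsilon)n$. A perfect fractional matching of $G$ is $\mathbf{x}\colon E(G)\to\mathbb{R}_{\geq0}$ with $\sum_{w\in N^+(v)}\mathbf{x}_{vw}=1=\sum_{w\in N^-(v)}\mathbf{x}_{wv}$ for all $v$; it is $b$-normal if $\frac1{bn}\leq\mathbf{x}_e\leq\frac bn$ for all $e$. $L=(y_t)_{t\in\mathbb{N}_0}$ is an oriented path (not a subgraph of $G$) whose consecutive vertices $y_t,y_{t+1}$ are joined by exactly one of the edges $y_ty_{t+1}$, $y_{t+1}y_t$. The random walk on $G$ induced by $\mathbf{x}$ following the pattern of $L$ is a Markov chain $(Z_t)$ on $V(G)$ (with arbitrary initial state/distribution)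 with $\mathbb{P}[Z_{t+1}=w\mid Z_t=v]=\mathbf{x}_{vw}$ if $y_ty_{t+1}\in E(L)$ and $vw\in E(G)$, $=\mathbf{x}_{wv}$ if $y_{t+1}y_t\in E(L)$ and $wv\in E(G)$, and $=0$ otherwise. *)

theory Defs
  imports Complex_Main
begin

definition out_nbrs :: "(nat \<times> nat) set \<Rightarrow> nat \<Rightarrow> nat set" where
  "out_nbrs E v = {w. (v, w) \<in> E}"

definition in_nbrs :: "(nat \<times> nat) set \<Rightarrow> nat \<Rightarrow> nat set" where
  "in_nbrs E v = {w. (w, v) \<in> E}"

definition is_digraph :: "nat \<Rightarrow> (nat \<times> nat) set \<Rightarrow> bool" where
  "is_digraph n E \<longleftrightarrow> E \<subseteq> {0..<n} \<times> {0..<n} \<and> (\<forall>v. (v, v) \<notin> E)"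

definition n_eps_digraph :: "nat \<Rightarrow> real \<Rightarrow> (nat \<times> nat) set \<Rightarrow> bool" where
  "n_eps_digraph n eps E \<longleftrightarrow> is_digraph n E \<and>
     (\<forall>v \<in> {0..<n}. real (card (out_nbrs E v)) \<ge> (1/2 + eps) * real n \<and>
                     real (card (in_nbrs E v)) \<ge> (1/2 + eps) * real n)"

definition perfect_fractional_matching ::
  "nat \<Rightarrow> (nat \<times> nat) set \<Rightarrow> (nat \<times> nat \<Rightarrow> real) \<Rightarrow> bool" where
  "perfect_fractional_matching n E x \<longleftrightarrow>
     (\<forall>e \<in> E. x e \<ge> 0) \<and>
     (\<forall>v \<in> {0..<n}. (\<Sum>w \<in> out_nbrs E v. x (v, w)) = 1 \<and> (\<Sum>w \<in> in_nbrs E v. x (w, v)) = 1)"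

definition b_normal :: "nat \<Rightarrow> (nat \<times> nat) set \<Rightarrow> real \<Rightarrow> (nat \<times> nat \<Rightarrow> real) \<Rightarrow> bool" where
  "b_normal n E b x \<longleftrightarrow> (\<forall>e \<in> E. 1 / (b * real n) \<le> x e \<and> x e \<le> b / real n)"

text \<open>An oriented path L = (y_t) is encoded by its pattern fwd :: nat => bool, where
  fwd t holds iff the edge between y_t and y_{t+1} is y_t y_{t+1} (forward), and otherwise
  it is y_{t+1} y_t.\<close>
definition walk_trans ::
  "(nat \<times> nat) set \<Rightarrow> (nat \<times> nat \<Rightarrow> real) \<Rightarrow> (nat \<Rightarrow> bool) \<Rightarrow> nat \<Rightarrow> nat \<Rightarrow> nat \<Rightarrow> real" where
  "walk_trans E x fwd t v w =
     (if fwd t then (if (v, w) \<in> E then x (v, w) else 0)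
      else (if (w, v) \<in> E then x (w, v) else 0))"

text \<open>Marginal law of the Markov chain: walk_dist n E x fwd p0 t v = P[Z_t = v],
  for initial distribution p0 on {0..<n}.\<close>
fun walk_dist ::
  "nat \<Rightarrow> (nat \<times> nat) set \<Rightarrow> (nat \<times> nat \<Rightarrow> real) \<Rightarrow> (nat \<Rightarrow> bool) \<Rightarrow> (nat \<Rightarrow> real) \<Rightarrow> nat \<Rightarrow> nat \<Rightarrow> real" where
  "walk_dist n E x fwd p0 0 v = p0 v"
| "walk_dist n E x fwd p0 (Suc t) w =
     (\<Sum>v \<in> {0..<n}. walk_dist n E x fwd p0 t v * walk_trans E x fwd t v w)"

definition prob_dist_on :: "nat \<Rightarrow> (nat \<Rightarrow> real) \<Rightarrow> bool" where
  "prob_dist_on n p \<longleftrightarrow> (\<forall>v. p v \<ge> 0) \<and> (\<forall>v. v \<ge> n \<longrightarrow> p v = 0) \<and> (\<Sum>v \<in> {0..<n}. p v) = 1"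

end

theory Submission
  imports Defs
begin

text \<open>Every transition probability of the walk is at most b/n, so after one step the distribution
  is within b/n of uniform. Each vertex has at least (1/2 + eps) n out- and in-neighbours, all joined
  by edges of weight at least 1/(bn); hence any two vertices v, w have at least 2 eps n common
  intermediate vertices, and every two-step transition probability is at least (2 eps/b^2)/n.
  As all transition matrices are doubly stochastic, such a uniform lower bound shrinks the
  maximal deviation from 1/n by the factor 1 - 2 eps/b^2 (a Doeblin-type argument), and
  (1 - 2 eps/b^2)^((t-1)/2) b \<le> exp (- eps t/(2 b^2)) once t \<ge> 5 + 4 b^2/eps log b.
  The estimate holds for every n, so n0 = 0 suffices.\<close>

lemma deviation_from_uniform_contracts:
  fixes P :: "nat \<Rightarrow> nat \<Rightarrow> real" and p :: "nat \<Rightarrow> real"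
  assumes col_sum: "\<And>w. w < n \<Longrightarrow> (\<Sum>v\<in>{0..<n}. P v w) = 1"
    and lower: "\<And>v w. v < n \<Longrightarrow> w < n \<Longrightarrow> c / real n \<le> P v w"
    and p_sum: "(\<Sum>v\<in>{0..<n}. p v) = 1"
    and dev: "\<And>v. v < n \<Longrightarrow> \<bar>p v - 1 / real n\<bar> \<le> D"
    and w: "w < n"
  shows "\<bar>(\<Sum>v\<in>{0..<n}. p v * P v w) - 1 / real n\<bar> \<le> (1 - c) * D"
proof -
  have dev_sum: "(\<Sum>v\<in>{0..<n}. p v - 1 / real n) = 0"
    using p_sum w by (simp add: sum_subtractf)
  \<comment> \<open>Both the uniform distribution and the constant c/n can be subtracted for free, leaving
    the deviations weighted by the nonnegative numbers P v w - c/n of total mass 1 - c.\<close>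
  have "(\<Sum>v\<in>{0..<n}. p v * P v w) - 1 / real n
      = (\<Sum>v\<in>{0..<n}. (p v - 1 / real n) * (P v w - c / real n))"
    using col_sum[OF w] dev_sum
    by (simp add: algebra_simps sum_subtractf sum.distrib sum_distrib_left[symmetric]
        sum_divide_distrib[symmetric])
  also have "\<bar>\<dots>\<bar> \<le> (\<Sum>v\<in>{0..<n}. D * (P v w - c / real n))"
  proof (rule order_trans[OF sum_abs sum_mono])
    fix v assume "v \<in> {0..<n}"
    then show "\<bar>(p v - 1 / real n) * (P v w - c / real n)\<bar> \<le> D * (P v w - c / real n)"
      using dev lower[of v w] w by (simp add: abs_mult mult_right_mono)
  qed
  also have "\<dots> = (1 - c) * D"
    using col_sum[OF w] w by (simp add: sum_distrib_left[symmetric] sum_subtractf)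
  finally show ?thesis .
qed

lemma sum_mult_ge_of_large_level_sets:
  fixes f g :: "nat \<Rightarrow> real"
  assumes f: "\<And>u. 0 \<le> f u" and g: "\<And>u. 0 \<le> g u" and a: "0 \<le> a"
    and card_f: "(1/2 + eps) * real n \<le> real (card {u\<in>{0..<n}. a \<le> f u})"
    and card_g: "(1/2 + eps) * real n \<le> real (card {u\<in>{0..<n}. a \<le> g u})"
  shows "2 * eps * real n * a\<^sup>2 \<le> (\<Sum>u\<in>{0..<n}. f u * g u)"
proof -
  define S where "S = {u\<in>{0..<n}. a \<le> f u} \<inter> {u\<in>{0..<n}. a \<le> g u}"
  have "card ({u\<in>{0..<n}. a \<le> f u} \<union> {u\<in>{0..<n}. a \<le> g u}) \<le> n"
    by (metis (no_types, lifting) card_atLeastLessThan card_mono diff_zero finite_atLeastLessThan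
        Un_least mem_Collect_eq subsetI atLeastLessThan_iff)
  then have card_S: "2 * eps * real n \<le> real (card S)"
    using card_f card_g card_Un_Int[of "{u\<in>{0..<n}. a \<le> f u}" "{u\<in>{0..<n}. a \<le> g u}"]
    unfolding S_def by (simp add: algebra_simps)
  have "2 * eps * real n * a\<^sup>2 \<le> real (card S) * a\<^sup>2"
    using card_S by (simp add: mult_right_mono)
  also have "\<dots> = (\<Sum>u\<in>S. a * a)"
    by (simp add: power2_eq_square)
  also have "\<dots> \<le> (\<Sum>u\<in>S. f u * g u)"
    using a by (intro sum_mono mult_mono) (auto simp: S_def g)
  also have "\<dots> \<le> (\<Sum>u\<in>{0..<n}. f u * g u)"
    using f g by (intro sum_mono2) (auto simp: S_def)
  finally show ?thesis .
qed

definition kernel_comp :: "nat \<Rightarrow> (nat \<Rightarrow> nat \<Rightarrow> real) \<Rightarrow> (nat \<Rightarrow> nat \<Rightarrow> real) \<Rightarrow> nat \<Rightarrow> nat \<Rightarrow> real"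
  where "kernel_comp n P R v w = (\<Sum>u\<in>{0..<n}. P v u * R u w)"

lemma kernel_comp_col_sum:
  assumes "\<And>u. u < n \<Longrightarrow> (\<Sum>v\<in>{0..<n}. P v u) = 1"
    and "\<And>w. w < n \<Longrightarrow> (\<Sum>u\<in>{0..<n}. R u w) = 1"
    and "w < n"
  shows "(\<Sum>v\<in>{0..<n}. kernel_comp n P R v w) = 1"
proof -
  have "(\<Sum>v\<in>{0..<n}. kernel_comp n P R v w) = (\<Sum>u\<in>{0..<n}. (\<Sum>v\<in>{0..<n}. P v u) * R u w)"
    unfolding kernel_comp_def by (subst sum.swap) (simp add: sum_distrib_right)
  also have "\<dots> = 1"
    using assms by simp
  finally show ?thesis .
qed

lemma kernel_apply_comp:
  "(\<Sum>u\<in>{0..<n}. (\<Sum>v\<in>{0..<n}. p v * P v u) * R u w)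
     = (\<Sum>v\<in>{0..<n}. p v * kernel_comp n P R v w)"
  unfolding kernel_comp_def sum_distrib_left sum_distrib_right mult.assoc
  by (rule sum.swap)

lemma kernel_apply_total_mass:
  fixes P :: "nat \<Rightarrow> nat \<Rightarrow> real" and p :: "nat \<Rightarrow> real"
  assumes "\<And>v. v < n \<Longrightarrow> (\<Sum>w\<in>{0..<n}. P v w) = 1"
  shows "(\<Sum>w\<in>{0..<n}. \<Sum>v\<in>{0..<n}. p v * P v w) = (\<Sum>v\<in>{0..<n}. p v)"
proof -
  have "(\<Sum>w\<in>{0..<n}. \<Sum>v\<in>{0..<n}. p v * P v w) = (\<Sum>v\<in>{0..<n}. p v * (\<Sum>w\<in>{0..<n}. P v w))"
    by (simp only: sum_distrib_left) (rule sum.swap)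
  also have "\<dots> = (\<Sum>v\<in>{0..<n}. p v)"
    using assms by (intro sum.cong) auto
  finally show ?thesis .
qed

lemma deviation_after_bounded_step:
  fixes P :: "nat \<Rightarrow> nat \<Rightarrow> real" and p :: "nat \<Rightarrow> real"
  assumes p: "\<And>v. 0 \<le> p v" "(\<Sum>v\<in>{0..<n}. p v) = 1"
    and P: "\<And>v. 0 \<le> P v w" "\<And>v. P v w \<le> b / real n"
    and "1 \<le> b"
  shows "\<bar>(\<Sum>v\<in>{0..<n}. p v * P v w) - 1 / real n\<bar> \<le> b / real n"
proof -
  have "0 \<le> (\<Sum>v\<in>{0..<n}. p v * P v w)"
    using p P by (simp add: sum_nonneg)
  moreover have "(\<Sum>v\<in>{0..<n}. p v * P v w) \<le> (\<Sum>v\<in>{0..<n}. p v * (b / real n))"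
    using p P by (intro sum_mono mult_left_mono) auto
  moreover have "(\<Sum>v\<in>{0..<n}. p v * (b / real n)) = b / real n"
    using p(2) by (simp only: sum_distrib_right[symmetric])
  moreover have "0 \<le> 1 / real n" "1 / real n \<le> b / real n"
    using \<open>1 \<le> b\<close> by (simp_all add: divide_right_mono)
  ultimately show ?thesis
    unfolding abs_le_iff by linarith
qed

lemma contraction_rate_le_exp:
  fixes eps b :: real and t :: nat
  assumes eps: "0 < eps" "eps \<le> 1/2" and b: "1 \<le> b"
    and t: "5 + 4 * b\<^sup>2 / eps * log 2 b \<le> real t"
  shows "(1 - 2 * eps / b\<^sup>2) ^ ((t - 1) div 2) * b \<le> exp (- (eps / (2 * b\<^sup>2)) * real t)"
proof -
  define c where "c = eps / b\<^sup>2"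
  define k where "k = (t - 1) div 2"
  have b2: "1 \<le> b\<^sup>2" "0 < b\<^sup>2"
    using b by (auto simp: one_le_power)
  then have c: "0 < c" "2 * c \<le> 1"
    using eps by (auto simp: c_def field_simps)
  have "0 \<le> ln b" "0 < ln (2::real)" "ln (2::real) \<le> 1"
    using b ln_le_minus_one[of 2] by auto
  then have "ln b \<le> log 2 b"
    by (simp add: log_def le_divide_eq mult_left_le)
  moreover have "4 * log 2 b \<le> c * real t - 5 * c"
    using t eps b2 by (simp add: c_def field_simps)
  ultimately have ln_b: "4 * ln b \<le> c * real t - 5 * c"
    by linarith
  have "0 \<le> 4 * b\<^sup>2 / eps * log 2 b"
    using eps b by simp
  then have "c * 3 \<le> c * real t"
    using t c by (intro mult_left_mono) auto
  moreover have "c * (real t - 2) \<le> c * (2 * real k)"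
    using c by (intro mult_left_mono) (auto simp: k_def)
  ultimately have exponent: "ln b - 2 * c * real k \<le> - (c / 2) * real t"
    using ln_b by (simp add: algebra_simps del: mult_le_cancel_left_pos)
  have "(1 - 2 * c) ^ k * b \<le> exp (- 2 * c) ^ k * exp (ln b)"
    using b c exp_ge_add_one_self[of "- 2 * c"] by (intro mult_mono power_mono) auto
  also have "\<dots> = exp (ln b - 2 * c * real k)"
    by (simp add: exp_diff exp_of_nat_mult[symmetric] exp_minus field_simps)
  also have "\<dots> \<le> exp (- (c / 2) * real t)"
    using exponent by simp
  finally show ?thesis
    by (simp add: c_def k_def mult.commute)
qed

lemma sum_over_out_edges:
  assumes "is_digraph n E" "v < n"
  shows "(\<Sum>w\<in>{0..<n}. if (v, w) \<in> E then f w else 0) = (\<Sum>w\<in>out_nbrs E v. f w)"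
proof -
  have "{w\<in>{0..<n}. (v, w) \<in> E} = out_nbrs E v"
    using assms unfolding is_digraph_def out_nbrs_def by auto
  then show ?thesis
    by (metis (no_types) finite_atLeastLessThan sum.inter_filter)
qed

lemma sum_over_in_edges:
  assumes "is_digraph n E" "w < n"
  shows "(\<Sum>v\<in>{0..<n}. if (v, w) \<in> E then f v else 0) = (\<Sum>v\<in>in_nbrs E w. f v)"
proof -
  have "{v\<in>{0..<n}. (v, w) \<in> E} = in_nbrs E w"
    using assms unfolding is_digraph_def in_nbrs_def by auto
  then show ?thesis
    by (metis (no_types) finite_atLeastLessThan sum.inter_filter)
qed

locale fractional_matching_walk =
  fixes n :: nat and eps b :: real and E :: "(nat \<times> nat) set" and x :: "nat \<times> nat \<Rightarrow> real"
    and fwd :: "nat \<Rightarrow> bool" and p0 :: "nat \<Rightarrow> real"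
  assumes dense: "n_eps_digraph n eps E"
    and matching: "perfect_fractional_matching n E x"
    and normal: "b_normal n E b x"
    and b_ge_1: "1 \<le> b"
    and p0: "prob_dist_on n p0"
    and n_pos: "0 < n"
begin

abbreviation P :: "nat \<Rightarrow> nat \<Rightarrow> nat \<Rightarrow> real"
  where "P \<equiv> walk_trans E x fwd"

abbreviation p :: "nat \<Rightarrow> nat \<Rightarrow> real"
  where "p \<equiv> walk_dist n E x fwd p0"

lemma digraph: "is_digraph n E"
  using dense unfolding n_eps_digraph_def by simp

lemma trans_nonneg: "0 \<le> P t v w"
  using matching unfolding walk_trans_def perfect_fractional_matching_def by auto

lemma trans_upper: "P t v w \<le> b / real n"
  using normal b_ge_1 n_pos unfolding walk_trans_def b_normal_def by auto

lemma trans_col_sum: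
  assumes "w < n"
  shows "(\<Sum>v\<in>{0..<n}. P t v w) = 1"
proof (cases "fwd t")
  case True
  then have "(\<Sum>v\<in>{0..<n}. P t v w) = (\<Sum>v\<in>in_nbrs E w. x (v, w))"
    using sum_over_in_edges[OF digraph assms] by (simp add: walk_trans_def)
  then show ?thesis
    using matching assms unfolding perfect_fractional_matching_def by simp
next
  case False
  then have "(\<Sum>v\<in>{0..<n}. P t v w) = (\<Sum>v\<in>out_nbrs E w. x (w, v))"
    using sum_over_out_edges[OF digraph assms] by (simp add: walk_trans_def)
  then show ?thesis
    using matching assms unfolding perfect_fractional_matching_def by simp
qed

lemma trans_row_sum:
  assumes "v < n"
  shows "(\<Sum>w\<in>{0..<n}. P t v w) = 1"
proof (cases "fwd t")
  case True
  then have "(\<Sum>w\<in>{0..<n}. P t v w) = (\<Sum>w\<in>out_nbrs E v. x (v, w))"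
    using sum_over_out_edges[OF digraph assms] by (simp add: walk_trans_def)
  then show ?thesis
    using matching assms unfolding perfect_fractional_matching_def by simp
next
  case False
  then have "(\<Sum>w\<in>{0..<n}. P t v w) = (\<Sum>w\<in>in_nbrs E v. x (w, v))"
    using sum_over_in_edges[OF digraph assms] by (simp add: walk_trans_def)
  then show ?thesis
    using matching assms unfolding perfect_fractional_matching_def by simp
qed

lemma eps_le_half: "eps \<le> 1/2"
proof -
  have "card (out_nbrs E 0) \<le> n"
    using digraph card_mono[of "{0..<n}" "out_nbrs E 0"]
    unfolding is_digraph_def out_nbrs_def by auto
  moreover have "(1/2 + eps) * real n \<le> real (card (out_nbrs E 0))"
    using dense n_pos unfolding n_eps_digraph_def by auto
  ultimately have "(1/2 + eps) * real n \<le> 1 * real n"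
    by simp
  then show ?thesis
    using n_pos by simp
qed

lemma card_heavy_successors:
  assumes "v < n"
  shows "(1/2 + eps) * real n \<le> real (card {u\<in>{0..<n}. 1 / (b * real n) \<le> P t v u})"
proof -
  let ?N = "if fwd t then out_nbrs E v else in_nbrs E v"
  have "?N \<subseteq> {u\<in>{0..<n}. 1 / (b * real n) \<le> P t v u}"
    using digraph normal
    unfolding is_digraph_def b_normal_def walk_trans_def out_nbrs_def in_nbrs_def by auto
  then have "card ?N \<le> card {u\<in>{0..<n}. 1 / (b * real n) \<le> P t v u}"
    by (intro card_mono) auto
  moreover have "(1/2 + eps) * real n \<le> real (card ?N)"
    using dense assms unfolding n_eps_digraph_def by auto
  ultimately show ?thesis
    by linarith
qed

lemma card_heavy_predecessors:
  assumes "w < n"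
  shows "(1/2 + eps) * real n \<le> real (card {u\<in>{0..<n}. 1 / (b * real n) \<le> P t u w})"
proof -
  let ?N = "if fwd t then in_nbrs E w else out_nbrs E w"
  have "?N \<subseteq> {u\<in>{0..<n}. 1 / (b * real n) \<le> P t u w}"
    using digraph normal
    unfolding is_digraph_def b_normal_def walk_trans_def out_nbrs_def in_nbrs_def by auto
  then have "card ?N \<le> card {u\<in>{0..<n}. 1 / (b * real n) \<le> P t u w}"
    by (intro card_mono) auto
  moreover have "(1/2 + eps) * real n \<le> real (card ?N)"
    using dense assms unfolding n_eps_digraph_def by auto
  ultimately show ?thesis
    by linarith
qed

lemma two_step_trans_lower:
  assumes "v < n" "w < n"
  shows "(2 * eps / b\<^sup>2) / real n \<le> kernel_comp n (P t) (P (Suc t)) v w"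
proof -
  have "2 * eps * real n * (1 / (b * real n))\<^sup>2 \<le> kernel_comp n (P t) (P (Suc t)) v w"
    unfolding kernel_comp_def using b_ge_1 n_pos
    by (intro sum_mult_ge_of_large_level_sets card_heavy_successors card_heavy_predecessors
        trans_nonneg assms) auto
  moreover have "2 * eps * real n * (1 / (b * real n))\<^sup>2 = (2 * eps / b\<^sup>2) / real n"
    using n_pos by (simp add: field_simps power2_eq_square)
  ultimately show ?thesis
    by simp
qed

lemma dist_sum: "(\<Sum>v\<in>{0..<n}. p t v) = 1"
proof (induction t)
  case 0
  then show ?case
    using p0 by (simp add: prob_dist_on_def)
next
  case (Suc t)
  then show ?case
    using kernel_apply_total_mass[of n "P t" "p t"] trans_row_sum by simp
qed

lemma dist_Suc_Suc:
  "p (Suc (Suc t)) w = (\<Sum>v\<in>{0..<n}. p t v * kernel_comp n (P t) (P (Suc t)) v w)"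
  by (simp add: kernel_apply_comp)

lemma deviation_at_odd_time:
  assumes "w < n"
  shows "\<bar>p (Suc (2 * k)) w - 1 / real n\<bar> \<le> (1 - 2 * eps / b\<^sup>2) ^ k * (b / real n)"
  using assms
proof (induction k arbitrary: w)
  case 0
  then show ?case
    using p0 b_ge_1 trans_nonneg trans_upper
    by (simp add: deviation_after_bounded_step prob_dist_on_def)
next
  case (Suc k)
  have "Suc (2 * Suc k) = Suc (Suc (Suc (2 * k)))"
    by simp
  then have "p (Suc (2 * Suc k)) w
      = (\<Sum>v\<in>{0..<n}. p (Suc (2 * k)) v * kernel_comp n (P (Suc (2 * k))) (P (Suc (Suc (2 * k)))) v w)"
    by (simp only: dist_Suc_Suc)
  also have "\<bar>\<dots> - 1 / real n\<bar> \<le> (1 - 2 * eps / b\<^sup>2) * ((1 - 2 * eps / b\<^sup>2) ^ k * (b / real n))"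
    by (intro deviation_from_uniform_contracts kernel_comp_col_sum trans_col_sum two_step_trans_lower
        dist_sum Suc)
  finally show ?case
    by simp
qed

lemma deviation_bound:
  assumes "w < n" "1 \<le> t"
  shows "\<bar>p t w - 1 / real n\<bar> \<le> (1 - 2 * eps / b\<^sup>2) ^ ((t - 1) div 2) * (b / real n)"
proof -
  define k where "k = (t - 1) div 2"
  have "t = Suc (2 * k) \<or> t = Suc (Suc (2 * k))"
    using assms(2) unfolding k_def by presburger
  then show ?thesis
  proof
    assume "t = Suc (2 * k)"
    then show ?thesis
      using deviation_at_odd_time[OF assms(1), of k] unfolding k_def[symmetric] by simp
  next
    assume t: "t = Suc (Suc (2 * k))"
    \<comment> \<open>A single step does not increase the deviation: the contraction with c = 0.\<close>
    have "\<bar>p t w - 1 / real n\<bar> \<le> (1 - 0) * ((1 - 2 * eps / b\<^sup>2) ^ k * (b / real n))"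
      unfolding t walk_dist.simps(2)[of n E x fwd p0 "Suc (2 * k)"]
      by (intro deviation_from_uniform_contracts trans_col_sum dist_sum deviation_at_odd_time assms(1))
        (auto simp: trans_nonneg)
    then show ?thesis
      by (simp add: k_def)
  qed
qed

lemma deviation_le_exp:
  assumes "w < n" "0 < eps" and t: "5 + 4 * b\<^sup>2 / eps * log 2 b \<le> real t"
  shows "\<bar>p t w - 1 / real n\<bar> \<le> exp (- (eps / (2 * b\<^sup>2)) * real t) / real n"
proof -
  have "0 \<le> 4 * b\<^sup>2 / eps * log 2 b"
    using assms b_ge_1 by simp
  then have "1 \<le> t"
    using t by linarith
  then have "\<bar>p t w - 1 / real n\<bar> \<le> (1 - 2 * eps / b\<^sup>2) ^ ((t - 1) div 2) * b / real n"
    using deviation_bound[OF assms(1)] by simp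
  also have "\<dots> \<le> exp (- (eps / (2 * b\<^sup>2)) * real t) / real n"
    using contraction_rate_le_exp[OF \<open>0 < eps\<close> eps_le_half b_ge_1 t] n_pos
    by (simp add: divide_right_mono)
  finally show ?thesis .
qed

end

theorem corollary5p4:
  shows "\<forall>eps::real. 0 < eps \<and> eps \<le> 1 \<longrightarrow>
    (\<exists>n0::nat. \<forall>n \<ge> n0. \<forall>E x (b::real) fwd p0.
       n_eps_digraph n eps E \<and> perfect_fractional_matching n E x \<and> b \<ge> 1 \<and> b_normal n E b x
       \<and> prob_dist_on n p0 \<longrightarrow>
       (\<forall>v \<in> {0..<n}. \<forall>t::nat. real t \<ge> 5 + 4 * b\<^sup>2 / eps * log 2 b \<longrightarrow>
          (1 - exp (- (eps / (2 * b\<^sup>2)) * real t)) / real n \<le> walk_dist n E x fwd p0 t v \<and>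
          walk_dist n E x fwd p0 t v \<le> (1 + exp (- (eps / (2 * b\<^sup>2)) * real t)) / real n))"
proof (intro allI impI exI[of _ 0] ballI)
  fix eps b :: real and n :: nat and E x fwd p0 v t
  assume eps: "0 < eps \<and> eps \<le> 1"
    and H: "n_eps_digraph n eps E \<and> perfect_fractional_matching n E x \<and> b \<ge> 1
      \<and> b_normal n E b x \<and> prob_dist_on n p0"
    and v: "v \<in> {0..<n}" and t: "5 + 4 * b\<^sup>2 / eps * log 2 b \<le> real t"
  interpret fractional_matching_walk n eps b E x fwd p0
    using H v by unfold_locales auto
  have "\<bar>walk_dist n E x fwd p0 t v - 1 / real n\<bar> \<le> exp (- (eps / (2 * b\<^sup>2)) * real t) / real n"
    using deviation_le_exp v eps t by simp
  then show "(1 - exp (- (eps / (2 * b\<^sup>2)) * real t)) / real n \<le> walk_dist n E x fwd p0 t v \<and>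
      walk_dist n E x fwd p0 t v \<le> (1 + exp (- (eps / (2 * b\<^sup>2)) * real t)) / real n"
    by (simp add: diff_divide_distrib add_divide_distrib abs_le_iff)
qed

end
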